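(* Let $(A,\mathfrak{m})$ be a Cohen–Macaulay local ring of dimension $d>0$ with infinite residue field. Let $M$ be a Cohen–Macaulay $A$-module of dimension $1$ with a presentation $G\xrightarrow{\phi}F\to M\to0$ ($F,G$ finite free) such that all entries of $\phi$ lie in $\mathfrak{m}^l$. Suppose $\operatorname{depth}G(A)\ge1$ and $x$ is an $A\oplus M$-superficial element. Then: 1. $(\mathfrak{m}^{i+1}M:_Mx)=\mathfrak{m}^iM$ for $i=0,\dots,l-1$. 2. If moreover $\mathfrak{m}^lM\subseteq xM$, then $\operatorname{depth}G(M)\ge1$.
   Context: $x\in\mathfrak{m}$ is superficial for a module $N$ if there is $c>0$ with $(\mathfrak{m}^nN:_Nx)\cap\mathfrak{m}^cN=\mathfrak{m}^{n-1}N$ for all $n>c$. $G(M)=\bigoplus_n\mathfrak{m}^nM/\mathfrak{m}^{n+1}M$, $G(A)=\bigoplus_n\mathfrak{m}^n/\mathfrak{m}^{n+1}$, depth with respect to the irrelevant maximal ideal of $G(A)$. *)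

theory Defs
  imports Main "HOL-Library.Product_Plus" "HOL-Library.Extended_Nat"
begin

text \<open>Commutative algebra over a type-class ring 'a :: comm_ring_1.
  A module over 'a is a type 'b :: ab_group_add with a scalar action
  scale satisfying the HOL locale module scale.\<close>

definition is_ideal :: "'a::comm_ring_1 set \<Rightarrow> bool" where
  "is_ideal I \<longleftrightarrow> 0 \<in> I \<and> (\<forall>a\<in>I. \<forall>b\<in>I. a + b \<in> I) \<and> (\<forall>r. \<forall>a\<in>I. r * a \<in> I)"

definition maximal_ideal :: "'a::comm_ring_1 set \<Rightarrow> bool" where
  "maximal_ideal I \<longleftrightarrow> is_ideal I \<and> I \<noteq> UNIV \<and>
     (\<forall>J. is_ideal J \<and> I \<subseteq> J \<and> J \<noteq> UNIV \<longrightarrow> J = I)"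

definition prime_ideal :: "'a::comm_ring_1 set \<Rightarrow> bool" where
  "prime_ideal P \<longleftrightarrow> is_ideal P \<and> P \<noteq> UNIV \<and> (\<forall>a b. a * b \<in> P \<longrightarrow> a \<in> P \<or> b \<in> P)"

definition set_smult :: "('a \<Rightarrow> 'b \<Rightarrow> 'b::ab_group_add) \<Rightarrow> 'a set \<Rightarrow> 'b set \<Rightarrow> 'b set" where
  "set_smult scale I N = {(\<Sum>i<(k::nat). scale (a i) (v i)) | k a v. \<forall>i<k. a i \<in> I \<and> v i \<in> N}"

definition ideal_gen :: "'a::comm_ring_1 set \<Rightarrow> 'a set" where
  "ideal_gen S = set_smult (*) UNIV S"

fun ideal_pow :: "'a::comm_ring_1 set \<Rightarrow> nat \<Rightarrow> 'a set" where
  "ideal_pow I 0 = UNIV"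
| "ideal_pow I (Suc n) = set_smult (*) I (ideal_pow I n)"

definition mpow_mod :: "('a::comm_ring_1 \<Rightarrow> 'b \<Rightarrow> 'b::ab_group_add) \<Rightarrow> 'a set \<Rightarrow> nat \<Rightarrow> 'b set" where
  "mpow_mod scale m n = set_smult scale (ideal_pow m n) UNIV"

definition mod_colon :: "('a \<Rightarrow> 'b \<Rightarrow> 'b) \<Rightarrow> 'b set \<Rightarrow> 'a \<Rightarrow> 'b set" where
  "mod_colon scale N x = {v. scale x v \<in> N}"

definition noetherian_ring :: "'a::comm_ring_1 itself \<Rightarrow> bool" where
  "noetherian_ring _ \<longleftrightarrow> (\<forall>I::'a set. is_ideal I \<longrightarrow> (\<exists>S. finite S \<and> I = ideal_gen S))"

definition noetherian_local :: "'a::comm_ring_1 set \<Rightarrow> bool" where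
  "noetherian_local m \<longleftrightarrow> noetherian_ring TYPE('a) \<and> maximal_ideal m \<and>
     (\<forall>J. maximal_ideal J \<longrightarrow> J = m)"

definition infinite_residue_field :: "'a::comm_ring_1 set \<Rightarrow> bool" where
  "infinite_residue_field m \<longleftrightarrow> infinite ((\<lambda>a. {b. a - b \<in> m}) ` UNIV)"

text \<open>Krull dimension of A/J: supremum of lengths of chains of primes containing J.\<close>
definition krull_dim :: "'a::comm_ring_1 set \<Rightarrow> enat" where
  "krull_dim J = Sup {enat n | n. \<exists>p. (\<forall>i\<le>n. prime_ideal (p i) \<and> J \<subseteq> p i) \<and>
                                     (\<forall>i<n. p i \<subset> p (Suc i))}"

definition annihilator :: "('a::comm_ring_1 \<Rightarrow> 'b \<Rightarrow> 'b::ab_group_add) \<Rightarrow> 'a set" where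
  "annihilator scale = {a. \<forall>v. scale a v = 0}"

definition module_dim :: "('a::comm_ring_1 \<Rightarrow> 'b \<Rightarrow> 'b::ab_group_add) \<Rightarrow> enat" where
  "module_dim scale = krull_dim (annihilator scale)"

definition regular_seq :: "('a::comm_ring_1 \<Rightarrow> 'b \<Rightarrow> 'b::ab_group_add) \<Rightarrow> 'a set \<Rightarrow> (nat \<Rightarrow> 'a) \<Rightarrow> nat \<Rightarrow> bool" where
  "regular_seq scale m xs n \<longleftrightarrow>
     (\<forall>i<n. xs i \<in> m) \<and>
     (\<forall>i<n. \<forall>v. scale (xs i) v \<in> set_smult scale (ideal_gen (xs ` {..<i})) UNIV
                 \<longrightarrow> v \<in> set_smult scale (ideal_gen (xs ` {..<i})) UNIV) \<and>
     set_smult scale (ideal_gen (xs ` {..<n})) UNIV \<noteq> UNIV"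

definition depth :: "('a::comm_ring_1 \<Rightarrow> 'b \<Rightarrow> 'b::ab_group_add) \<Rightarrow> 'a set \<Rightarrow> enat" where
  "depth scale m = Sup {enat n | n. \<exists>xs. regular_seq scale m xs n}"

definition cohen_macaulay :: "('a::comm_ring_1 \<Rightarrow> 'b \<Rightarrow> 'b::ab_group_add) \<Rightarrow> 'a set \<Rightarrow> bool" where
  "cohen_macaulay scale m \<longleftrightarrow> depth scale m = module_dim scale"

definition superficial :: "('a::comm_ring_1 \<Rightarrow> 'b \<Rightarrow> 'b::ab_group_add) \<Rightarrow> 'a set \<Rightarrow> 'a \<Rightarrow> bool" where
  "superficial scale m x \<longleftrightarrow> x \<in> m \<and> (\<exists>c>0. \<forall>n>c.
      mod_colon scale (mpow_mod scale m n) x \<inter> mpow_mod scale m c = mpow_mod scale m (n - 1))"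

definition sum_scale :: "('a::comm_ring_1 \<Rightarrow> 'b \<Rightarrow> 'b::ab_group_add) \<Rightarrow> 'a \<Rightarrow> 'a \<times> 'b \<Rightarrow> 'a \<times> 'b" where
  "sum_scale scale a p = (a * fst p, scale a (snd p))"

text \<open>M has a presentation G --phi--> F --> M --> 0 with F = A^n, G = A^k
  (phi an n x k matrix) and all entries of phi in m^l: generators g 0..g (n-1)
  of M, and the kernel of c \<mapsto> \<Sum> c_i g_i is exactly the image of phi.\<close>
definition has_presentation_in_pow :: "('a::comm_ring_1 \<Rightarrow> 'b \<Rightarrow> 'b::ab_group_add) \<Rightarrow> 'a set \<Rightarrow> nat \<Rightarrow> bool" where
  "has_presentation_in_pow scale m l \<longleftrightarrow> (\<exists>n k (g :: nat \<Rightarrow> 'b) (phi :: nat \<Rightarrow> nat \<Rightarrow> 'a).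
     (\<forall>v. \<exists>c. v = (\<Sum>i<n. scale (c i) (g i))) \<and>
     (\<forall>c. (\<Sum>i<n. scale (c i) (g i)) = 0 \<longleftrightarrow> (\<exists>b. \<forall>i<n. c i = (\<Sum>j<k. phi i j * b j))) \<and>
     (\<forall>i<n. \<forall>j<k. phi i j \<in> ideal_pow m l))"

text \<open>depth G(M) \<ge> 1 (depth w.r.t. the irrelevant maximal ideal G(A)_+ of G(A)):
  there is an element u of G(A)_+ which is a nonzerodivisor on G(M).
  Elements of G(A) = \<Oplus> m^n/m^(n+1) are represented by sequences u with
  u n \<in> m^n, almost all u n \<in> m^(n+1); u \<in> G(A)_+ iff its degree 0 component vanishes,
  i.e. u 0 \<in> m. Likewise elements of G(M) by sequences f with f n \<in> m^n M.
  The product u f has degree n component \<Sum>(i+j=n) u_i f_j mod m^(n+1) M.\<close>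
definition assoc_graded_depth_pos :: "('a::comm_ring_1 \<Rightarrow> 'b \<Rightarrow> 'b::ab_group_add) \<Rightarrow> 'a set \<Rightarrow> bool" where
  "assoc_graded_depth_pos scale m \<longleftrightarrow> (\<exists>u :: nat \<Rightarrow> 'a.
     (\<forall>n. u n \<in> ideal_pow m n) \<and> u 0 \<in> m \<and> (\<exists>N. \<forall>n\<ge>N. u n \<in> ideal_pow m (Suc n)) \<and>
     (\<forall>f :: nat \<Rightarrow> 'b.
        (\<forall>n. f n \<in> mpow_mod scale m n) \<and> (\<exists>N. \<forall>n\<ge>N. f n \<in> mpow_mod scale m (Suc n)) \<and>
        (\<forall>n. (\<Sum>i\<le>n. scale (u i) (f (n - i))) \<in> mpow_mod scale m (Suc n))
        \<longrightarrow> (\<forall>n. f n \<in> mpow_mod scale m (Suc n))))"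

end

(*
  Superficiality of x and an element u of positive degree that is regular on G(A) make the initial
  form of x regular on G(A), i.e. (m^(n+1) : x) = m^n for all n: an element of G(A) annihilated by
  the initial form of x is carried by u to annihilated elements of ever higher order, and these
  vanish by superficiality.

  Part 1 is then read off the presentation. If x v lies in m^(i+1) M, write v = sum c_j g_j and
  x v = sum b_j g_j with b_j in m^(i+1); the differences x c_j - b_j are the coefficients of a
  relation, so they lie in m^l, which is contained in m^(i+1) for i < l. Hence x c_j lies in
  m^(i+1), and c_j in m^i.

  For part 2, m^l M contained in x M and part 1 give m^(j+1) M = x m^j M for j >= l - 1. Then x is
  M-regular: if x z = 0 and y is M-regular, then y^p z lies in m^p M, which for large p is contained
  in x^s M, where ker x^s = ker x^(s+1) (M is Noetherian); so y^p z = 0 and z = 0. Consequently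
  (m^(n+1) M : x) = m^n M for all n, i.e. the initial form of x is regular on G(M).
*)
theory Submission
  imports Defs
begin

declare ideal_pow.simps(2) [simp del]

section \<open>Sums of products \<open>I N\<close>\<close>

lemma set_smultI:
  fixes k :: nat
  assumes "p = (\<Sum>i<k. scale (a i) (v i))" and "\<And>i. i < k \<Longrightarrow> a i \<in> I" and "\<And>i. i < k \<Longrightarrow> v i \<in> N"
  shows "p \<in> set_smult scale I N"
  unfolding set_smult_def assms(1) using assms(2,3) by blast

lemma set_smultE:
  assumes "p \<in> set_smult scale I N"
  obtains k :: nat and a v where "p = (\<Sum>i<k. scale (a i) (v i))"
    and "\<And>i. i < k \<Longrightarrow> a i \<in> I" and "\<And>i. i < k \<Longrightarrow> v i \<in> N"
  using assms unfolding set_smult_def by blast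

lemma set_smult_zero: "0 \<in> set_smult scale I N"
  unfolding set_smult_def by force

lemma set_smult_scale_mem: "a \<in> I \<Longrightarrow> v \<in> N \<Longrightarrow> scale a v \<in> set_smult scale I N"
  by (rule set_smultI[where k = "Suc 0" and a = "\<lambda>_. a" and v = "\<lambda>_. v"]) simp_all

lemma set_smult_add:
  assumes "p \<in> set_smult scale I N" and "q \<in> set_smult scale I N"
  shows "p + q \<in> set_smult scale I N"
proof -
  obtain k :: nat and a v where p: "p = (\<Sum>i<k. scale (a i) (v i))"
    and a: "\<And>i. i < k \<Longrightarrow> a i \<in> I" and v: "\<And>i. i < k \<Longrightarrow> v i \<in> N"
    using assms(1) by (rule set_smultE) blast
  obtain k' :: nat and b w where q: "q = (\<Sum>i<k'. scale (b i) (w i))"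
    and b: "\<And>i. i < k' \<Longrightarrow> b i \<in> I" and w: "\<And>i. i < k' \<Longrightarrow> w i \<in> N"
    using assms(2) by (rule set_smultE) blast
  define c where "c i = (if i < k then a i else b (i - k))" for i
  define z where "z i = (if i < k then v i else w (i - k))" for i
  have "(\<Sum>i<k + j. scale (c i) (z i)) = p + (\<Sum>i<j. scale (b i) (w i))" for j
    by (induction j) (simp_all add: p c_def z_def)
  then show ?thesis
    using a b v w by (intro set_smultI[where k = "k + k'" and a = c and v = z]) (auto simp: c_def z_def q)
qed

lemma set_smult_least:
  assumes "0 \<in> S" and "\<And>p q. p \<in> S \<Longrightarrow> q \<in> S \<Longrightarrow> p + q \<in> S"
    and "\<And>a v. a \<in> I \<Longrightarrow> v \<in> N \<Longrightarrow> scale a v \<in> S"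
  shows "set_smult scale I N \<subseteq> S"
proof
  fix p assume "p \<in> set_smult scale I N"
  then obtain k :: nat and a v where p: "p = (\<Sum>i<k. scale (a i) (v i))"
    and "\<And>i. i < k \<Longrightarrow> a i \<in> I" and "\<And>i. i < k \<Longrightarrow> v i \<in> N"
    by (rule set_smultE) blast
  then have "(\<Sum>i<j. scale (a i) (v i)) \<in> S" if "j \<le> k" for j
    using that by (induction j) (auto simp: assms)
  then show "p \<in> S"
    using p by blast
qed

lemma set_smult_mono: "I \<subseteq> J \<Longrightarrow> set_smult scale I N \<subseteq> set_smult scale J N"
  by (rule set_smult_least) (auto intro: set_smult_zero set_smult_add set_smult_scale_mem)

lemma set_smult_empty: "set_smult scale I {} = {0}"
  using set_smult_least[of "{0}" I "{}" scale] set_smult_zero by auto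

interpretation ring: module "(*) :: 'a::comm_ring_1 \<Rightarrow> 'a \<Rightarrow> 'a"
  by standard (simp_all add: algebra_simps)

lemma is_ideal_iff_subspace: "is_ideal I \<longleftrightarrow> ring.subspace I"
  unfolding is_ideal_def ring.subspace_def ..

context module
begin

lemma subspace_set_smult:
  assumes "is_ideal I"
  shows "subspace (set_smult scale I N)"
proof -
  have "c *s p \<in> set_smult scale I N" if "p \<in> set_smult scale I N" for c p
    using \<open>p \<in> set_smult scale I N\<close>
  proof (rule set_smultE)
    fix k :: nat and a v
    assume "p = (\<Sum>i<k. a i *s v i)" "\<And>i. i < k \<Longrightarrow> a i \<in> I" "\<And>i. i < k \<Longrightarrow> v i \<in> N"
    then show ?thesis
      using assms by (intro set_smultI[where k = k and a = "\<lambda>i. c * a i" and v = v])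
        (simp_all add: scale_sum_right is_ideal_def)
  qed
  then show ?thesis
    unfolding subspace_def using set_smult_zero set_smult_add by blast
qed

lemma set_smult_subset_subspace:
  "subspace S \<Longrightarrow> (\<And>a v. a \<in> I \<Longrightarrow> v \<in> N \<Longrightarrow> a *s v \<in> S) \<Longrightarrow>
    set_smult scale I N \<subseteq> S"
  unfolding subspace_def by (rule set_smult_least) blast+

lemma set_smult_zero_ideal: "set_smult scale {0} N = {0}"
  using set_smult_least[of "{0}" "{0}" N scale] set_smult_zero by auto

end

section \<open>Powers of an ideal and the filtration \<open>m\<^sup>n M\<close>\<close>

lemma ideal_set_smult: "is_ideal I \<Longrightarrow> is_ideal (set_smult (*) I N)"
  by (simp add: is_ideal_iff_subspace ring.subspace_set_smult)

lemma ideal_pow_ideal: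
  assumes "is_ideal m"
  shows "is_ideal (ideal_pow m n)"
proof (cases n)
  case 0
  then show ?thesis
    by (simp add: is_ideal_def)
next
  case (Suc k)
  then show ?thesis
    by (simp add: ideal_pow.simps(2) ideal_set_smult assms)
qed

lemma ideal_colon:
  assumes "is_ideal J"
  shows "is_ideal {a. a * b \<in> J}"
proof -
  have "(x + y) * b \<in> J" if "x * b \<in> J" "y * b \<in> J" for x y
    using assms that unfolding is_ideal_def distrib_right by blast
  moreover have "(r * x) * b \<in> J" if "x * b \<in> J" for r x
    using assms that unfolding is_ideal_def mult.assoc by blast
  ultimately show ?thesis
    using assms unfolding is_ideal_def by simp
qed

lemma ideal_pow_mult:
  assumes m: "is_ideal m"
  shows "a \<in> ideal_pow m p \<Longrightarrow> b \<in> ideal_pow m q \<Longrightarrow> a * b \<in> ideal_pow m (p + q)"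
proof (induction p arbitrary: a)
  case 0
  then show ?case
    using ideal_pow_ideal[OF m, of q] unfolding is_ideal_def by simp
next
  case (Suc p)
  have "set_smult (*) m (ideal_pow m p) \<subseteq> {a. a * b \<in> ideal_pow m (Suc p + q)}"
  proof (rule ring.set_smult_subset_subspace)
    show "ring.subspace {a. a * b \<in> ideal_pow m (Suc p + q)}"
      using ideal_colon[OF ideal_pow_ideal[OF m]] by (simp add: is_ideal_iff_subspace)
    fix c d assume "c \<in> m" "d \<in> ideal_pow m p"
    then have "c * (d * b) \<in> set_smult (*) m (ideal_pow m (p + q))"
      using Suc.IH Suc.prems(2) by (intro set_smult_scale_mem)
    then show "c * d \<in> {a. a * b \<in> ideal_pow m (Suc p + q)}"
      by (simp only: mem_Collect_eq mult.assoc add_Suc ideal_pow.simps(2))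
  qed
  then show ?case
    using Suc.prems(1) unfolding add_Suc ideal_pow.simps(2) by blast
qed

lemma ideal_pow_antimono:
  assumes m: "is_ideal m" and "p \<le> q"
  shows "ideal_pow m q \<subseteq> ideal_pow m p"
proof (rule lift_Suc_antimono_le[OF _ \<open>p \<le> q\<close>])
  fix n
  show "ideal_pow m (Suc n) \<subseteq> ideal_pow m n"
    unfolding ideal_pow.simps(2)
  proof (rule ring.set_smult_subset_subspace)
    show "ring.subspace (ideal_pow m n)"
      using ideal_pow_ideal[OF m] by (simp add: is_ideal_iff_subspace)
    show "a * b \<in> ideal_pow m n" if "b \<in> ideal_pow m n" for a b
      using ideal_pow_ideal[OF m, of n] that unfolding is_ideal_def by blast
  qed
qed

lemma set_smult_mult_UNIV:
  assumes "is_ideal I"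
  shows "set_smult (*) I UNIV = I"
proof
  show "set_smult (*) I UNIV \<subseteq> I"
  proof (rule ring.set_smult_subset_subspace)
    show "ring.subspace I"
      using assms by (simp add: is_ideal_iff_subspace)
    show "a * v \<in> I" if "a \<in> I" for a v
      using assms that unfolding is_ideal_def by (metis mult.commute)
  qed
  show "I \<subseteq> set_smult (*) I UNIV"
    using set_smult_scale_mem[of _ I 1 UNIV "(*)"] by auto
qed

lemma ideal_pow_1: "is_ideal m \<Longrightarrow> ideal_pow m 1 = m"
  by (simp add: ideal_pow.simps(2) set_smult_mult_UNIV)

lemma power_in_ideal_pow:
  assumes m: "is_ideal m" and "y \<in> m"
  shows "y ^ p \<in> ideal_pow m p"
proof (induction p)
  case (Suc p)
  have "y * y ^ p \<in> ideal_pow m (1 + p)"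
    using Suc.IH \<open>y \<in> m\<close> ideal_pow_1[OF m] by (intro ideal_pow_mult[OF m]) simp_all
  then show ?case
    by simp
qed simp

lemma mpow_mod_ring: "is_ideal m \<Longrightarrow> mpow_mod (*) m n = ideal_pow m n"
  by (simp add: mpow_mod_def set_smult_mult_UNIV ideal_pow_ideal)

context module
begin

lemma subspace_mpow_mod: "is_ideal m \<Longrightarrow> subspace (mpow_mod scale m n)"
  unfolding mpow_mod_def by (rule subspace_set_smult[OF ideal_pow_ideal])

lemma mpow_mod_0 [simp]: "mpow_mod scale m 0 = UNIV"
  using set_smult_scale_mem[of 1 UNIV _ UNIV scale] by (auto simp: mpow_mod_def)

lemma subspace_scale_preimage: "subspace S \<Longrightarrow> subspace {v. a *s v \<in> S}"
  unfolding subspace_def mem_Collect_eq scale_right_distrib scale_zero_right scale_left_commute[of a]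
  by blast

lemma mpow_mod_scale:
  assumes m: "is_ideal m" and a: "a \<in> ideal_pow m p"
  shows "v \<in> mpow_mod scale m q \<Longrightarrow> a *s v \<in> mpow_mod scale m (p + q)"
proof -
  have "mpow_mod scale m q \<subseteq> {v. a *s v \<in> mpow_mod scale m (p + q)}"
    unfolding mpow_mod_def[of _ _ q]
  proof (rule set_smult_subset_subspace)
    show "subspace {v. a *s v \<in> mpow_mod scale m (p + q)}"
      by (rule subspace_scale_preimage[OF subspace_mpow_mod[OF m]])
    fix b w assume "b \<in> ideal_pow m q"
    then have "(a * b) *s w \<in> mpow_mod scale m (p + q)"
      unfolding mpow_mod_def by (intro set_smult_scale_mem ideal_pow_mult[OF m a]) simp_all
    then show "b *s w \<in> {v. a *s v \<in> mpow_mod scale m (p + q)}"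
      by simp
  qed
  then show "v \<in> mpow_mod scale m q \<Longrightarrow> a *s v \<in> mpow_mod scale m (p + q)"
    by blast
qed

lemma mpow_mod_antimono: "is_ideal m \<Longrightarrow> p \<le> q \<Longrightarrow> mpow_mod scale m q \<subseteq> mpow_mod scale m p"
  unfolding mpow_mod_def by (intro set_smult_mono ideal_pow_antimono)

lemma mpow_mod_Suc_subset:
  assumes m: "is_ideal m"
  shows "mpow_mod scale m (Suc p) \<subseteq> set_smult scale m (mpow_mod scale m p)"
  unfolding mpow_mod_def[of _ _ "Suc p"]
proof (rule set_smult_subset_subspace)
  let ?T = "set_smult scale m (mpow_mod scale m p)"
  show T: "subspace ?T"
    by (rule subspace_set_smult[OF m])
  fix a v assume "a \<in> ideal_pow m (Suc p)"
  moreover have "set_smult (*) m (ideal_pow m p) \<subseteq> {a. a *s v \<in> ?T}"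
  proof (rule ring.set_smult_subset_subspace)
    show "ring.subspace {a. a *s v \<in> ?T}"
      using T unfolding subspace_def ring.subspace_def
      by (simp del: scale_scale add: scale_left_distrib scale_scale[symmetric])
    fix c d assume "c \<in> m" "d \<in> ideal_pow m p"
    then have "c *s (d *s v) \<in> ?T"
      by (intro set_smult_scale_mem) (simp_all add: mpow_mod_def set_smult_scale_mem)
    then show "c * d \<in> {a. a *s v \<in> ?T}"
      by simp
  qed
  ultimately show "a *s v \<in> ?T"
    unfolding ideal_pow.simps(2) by blast
qed

lemma subspace_coeff_span:
  assumes I: "is_ideal I"
  shows "subspace {w. \<exists>b. (\<forall>j<n. b j \<in> I) \<and> w = (\<Sum>j<n. b j *s g j)}" (is "subspace ?S")
  unfolding subspace_def
proof (intro conjI ballI allI)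
  show "0 \<in> ?S"
    using I unfolding is_ideal_def by (intro CollectI exI[of _ "\<lambda>_. 0"]) simp
  fix c x y assume "x \<in> ?S" "y \<in> ?S"
  then obtain b1 b2 where b1: "\<forall>j<n. b1 j \<in> I" "x = (\<Sum>j<n. b1 j *s g j)"
    and b2: "\<forall>j<n. b2 j \<in> I" "y = (\<Sum>j<n. b2 j *s g j)"
    by blast
  show "x + y \<in> ?S"
  proof (intro CollectI exI[of _ "\<lambda>j. b1 j + b2 j"] conjI)
    show "\<forall>j<n. b1 j + b2 j \<in> I"
      using b1(1) b2(1) I unfolding is_ideal_def by blast
    show "x + y = (\<Sum>j<n. (b1 j + b2 j) *s g j)"
      unfolding b1(2) b2(2) by (simp only: scale_left_distrib sum.distrib)
  qed
  show "c *s x \<in> ?S"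
  proof (intro CollectI exI[of _ "\<lambda>j. c * b1 j"] conjI)
    show "\<forall>j<n. c * b1 j \<in> I"
      using b1(1) I unfolding is_ideal_def by blast
    show "c *s x = (\<Sum>j<n. (c * b1 j) *s g j)"
      unfolding b1(2) by (simp only: scale_sum_right scale_scale)
  qed
qed

lemma set_smult_UNIV_generators:
  assumes gen: "\<forall>v. \<exists>c. v = (\<Sum>i<n. c i *s g i)" and I: "is_ideal I"
  shows "w \<in> set_smult scale I UNIV \<longleftrightarrow> (\<exists>b. (\<forall>j<n. b j \<in> I) \<and> w = (\<Sum>j<n. b j *s g j))"
proof
  have "set_smult scale I UNIV \<subseteq> {w. \<exists>b. (\<forall>j<n. b j \<in> I) \<and> w = (\<Sum>j<n. b j *s g j)}"
  proof (rule set_smult_subset_subspace[OF subspace_coeff_span[OF I]])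
    fix a v assume "a \<in> I"
    obtain d where v: "v = (\<Sum>i<n. d i *s g i)"
      using gen by blast
    show "a *s v \<in> {w. \<exists>b. (\<forall>j<n. b j \<in> I) \<and> w = (\<Sum>j<n. b j *s g j)}"
    proof (intro CollectI exI[of _ "\<lambda>j. d j * a"] conjI)
      show "\<forall>j<n. d j * a \<in> I"
        using \<open>a \<in> I\<close> I unfolding is_ideal_def by blast
      show "a *s v = (\<Sum>j<n. (d j * a) *s g j)"
        unfolding v by (simp only: scale_sum_right scale_scale mult.commute)
    qed
  qed
  then show "w \<in> set_smult scale I UNIV \<Longrightarrow> \<exists>b. (\<forall>j<n. b j \<in> I) \<and> w = (\<Sum>j<n. b j *s g j)"
    by blast
next
  assume "\<exists>b. (\<forall>j<n. b j \<in> I) \<and> w = (\<Sum>j<n. b j *s g j)"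
  then obtain b where "\<forall>j<n. b j \<in> I" and w: "w = (\<Sum>j<n. b j *s g j)"
    by blast
  then show "w \<in> set_smult scale I UNIV"
    unfolding w by (intro subspace_sum[OF subspace_set_smult[OF I]] set_smult_scale_mem) auto
qed

end

section \<open>Noetherian rings and regular elements\<close>

lemma ideal_gen_subset: "is_ideal J \<Longrightarrow> S \<subseteq> J \<Longrightarrow> ideal_gen S \<subseteq> J"
  unfolding ideal_gen_def is_ideal_iff_subspace
  by (intro ring.set_smult_subset_subspace) (auto simp: ring.subspace_def)

lemma ideal_gen_base: "S \<subseteq> ideal_gen S"
  unfolding ideal_gen_def using set_smult_scale_mem[of 1 UNIV _ S "(*)"] by auto

lemma ideal_UN_mono:
  fixes I :: "nat \<Rightarrow> 'a::comm_ring_1 set"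
  assumes "mono I" and "\<And>j. is_ideal (I j)"
  shows "is_ideal (\<Union>j. I j)"
  unfolding is_ideal_def
proof (intro conjI ballI allI)
  show "0 \<in> (\<Union>j. I j)"
    using assms(2) unfolding is_ideal_def by blast
  fix r a b assume "a \<in> (\<Union>j. I j)" "b \<in> (\<Union>j. I j)"
  then obtain i j where "a \<in> I i" "b \<in> I j"
    by blast
  then have "a \<in> I (max i j)" "b \<in> I (max i j)"
    using monoD[OF assms(1), of i "max i j"] monoD[OF assms(1), of j "max i j"] by auto
  then show "a + b \<in> (\<Union>j. I j)" and "r * a \<in> (\<Union>j. I j)"
    using assms(2)[of "max i j"] unfolding is_ideal_def by blast+
qed

lemma noetherian_ideal_chain_stabilizes:
  fixes I :: "nat \<Rightarrow> 'a::comm_ring_1 set"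
  assumes noeth: "noetherian_ring TYPE('a)" and mono: "mono I" and ideal: "\<And>j. is_ideal (I j)"
  shows "\<exists>J. \<forall>j\<ge>J. I j = I J"
proof -
  obtain F where "finite F" and F: "(\<Union>j. I j) = ideal_gen F"
    using noeth ideal_UN_mono[OF mono ideal] unfolding noetherian_ring_def by metis
  have "subset.chain UNIV (range I)"
    unfolding subset_chain_def
  proof (intro conjI ballI)
    fix X Y assume "X \<in> range I" "Y \<in> range I"
    then show "X \<subseteq> Y \<or> Y \<subseteq> X"
      using nat_le_linear monoD[OF mono] by blast
  qed simp
  then obtain B where "B \<in> range I" "F \<subseteq> B"
    using finite_subset_Union_chain[OF \<open>finite F\<close>, of "range I"] ideal_gen_base[of F] F by auto
  then obtain J where "F \<subseteq> I J"
    by blast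
  then have "(\<Union>j. I j) \<subseteq> I J"
    unfolding F by (rule ideal_gen_subset[OF ideal])
  then show ?thesis
    using monoD[OF mono] by blast
qed

text \<open>Submodules of \<open>A\<^sup>n\<close>, vectors being coefficient sequences that vanish from \<open>n\<close> on.\<close>
definition coeff_submodule :: "nat \<Rightarrow> (nat \<Rightarrow> 'a::comm_ring_1) set \<Rightarrow> bool" where
  "coeff_submodule n S \<longleftrightarrow> (\<lambda>_. 0) \<in> S \<and> (\<forall>c\<in>S. \<forall>d\<in>S. (\<lambda>i. c i + d i) \<in> S) \<and>
     (\<forall>r. \<forall>c\<in>S. (\<lambda>i. r * c i) \<in> S) \<and> (\<forall>c\<in>S. \<forall>i\<ge>n. c i = 0)"

lemma coeff_submodule_add:
  "coeff_submodule n S \<Longrightarrow> c \<in> S \<Longrightarrow> d \<in> S \<Longrightarrow> (\<lambda>i. c i + d i) \<in> S"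
  unfolding coeff_submodule_def by blast

lemma coeff_submodule_diff:
  assumes "coeff_submodule n S" and "c \<in> S" and "d \<in> S"
  shows "(\<lambda>i. c i - d i) \<in> S"
proof -
  have "(\<lambda>i. (- 1) * d i) \<in> S"
    using assms(1,3) unfolding coeff_submodule_def by blast
  from coeff_submodule_add[OF assms(1,2) this] show ?thesis
    by simp
qed

lemma ideal_coeff_image:
  assumes "coeff_submodule n S"
  shows "is_ideal ((\<lambda>c. c k) ` S)"
  unfolding is_ideal_def
proof (intro conjI ballI allI)
  show "0 \<in> (\<lambda>c. c k) ` S"
    using assms unfolding coeff_submodule_def by force
  fix r a b assume "a \<in> (\<lambda>c. c k) ` S" "b \<in> (\<lambda>c. c k) ` S"
  then obtain c d where "c \<in> S" "d \<in> S" "a = c k" "b = d k"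
    by blast
  moreover have "(\<lambda>i. c i + d i) \<in> S" "(\<lambda>i. r * c i) \<in> S"
    using assms calculation unfolding coeff_submodule_def by blast+
  ultimately show "a + b \<in> (\<lambda>c. c k) ` S" "r * a \<in> (\<lambda>c. c k) ` S"
    by force+
qed

lemma coeff_submodule_last_zero:
  assumes "coeff_submodule (Suc n) S"
  shows "coeff_submodule n {c \<in> S. c n = 0}"
proof -
  have "c i = 0" if "c \<in> S" "c n = 0" "n \<le> i" for c i
    using that assms unfolding coeff_submodule_def by (cases "i = n") auto
  then show ?thesis
    using assms unfolding coeff_submodule_def by simp
qed

lemma noetherian_coeff_submodule_chain_stabilizes:
  fixes S :: "nat \<Rightarrow> (nat \<Rightarrow> 'a::comm_ring_1) set"
  assumes noeth: "noetherian_ring TYPE('a)"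
  shows "mono S \<Longrightarrow> (\<And>j. coeff_submodule n (S j)) \<Longrightarrow> \<exists>J. \<forall>j\<ge>J. S j = S J"
proof (induction n arbitrary: S)
  case 0
  have "S j = {\<lambda>_. 0}" for j
  proof
    show "S j \<subseteq> {\<lambda>_. 0}"
      using "0.prems"(2)[of j] unfolding coeff_submodule_def by auto
    show "{\<lambda>_. 0} \<subseteq> S j"
      using "0.prems"(2)[of j] unfolding coeff_submodule_def by simp
  qed
  then show ?case
    by simp
next
  case (Suc n)
  define P where "P j = (\<lambda>c. c n) ` S j" for j
  define R where "R j = {c \<in> S j. c n = 0}" for j
  have "mono P"
    using Suc.prems(1) unfolding P_def mono_def by (simp add: image_mono)
  moreover have "is_ideal (P j)" for j
    unfolding P_def by (rule ideal_coeff_image[OF Suc.prems(2)])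
  ultimately obtain J1 where J1: "\<forall>j\<ge>J1. P j = P J1"
    using noetherian_ideal_chain_stabilizes[OF noeth] by blast
  have "mono R"
    using Suc.prems(1) unfolding R_def mono_def by blast
  moreover have "coeff_submodule n (R j)" for j
    unfolding R_def by (rule coeff_submodule_last_zero[OF Suc.prems(2)])
  ultimately obtain J2 where J2: "\<forall>j\<ge>J2. R j = R J2"
    using Suc.IH by blast
  define J where "J = max J1 J2"
  have "S j \<subseteq> S J" if "j \<ge> J" for j
  proof
    have "P j = P J" and "R j = R J"
      using J1[rule_format, of j] J1[rule_format, of J] J2[rule_format, of j] J2[rule_format, of J] that
      by (simp_all add: J_def)
    fix c assume c: "c \<in> S j"
    then have "c n \<in> P J"
      using \<open>P j = P J\<close> unfolding P_def by blast
    then obtain d where d: "d \<in> S J" "d n = c n"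
      unfolding P_def by auto
    then have "(\<lambda>i. c i - d i) \<in> R j"
      using coeff_submodule_diff[OF Suc.prems(2) c] monoD[OF Suc.prems(1) that] unfolding R_def by auto
    then have "(\<lambda>i. c i - d i) \<in> S J"
      using \<open>R j = R J\<close> unfolding R_def by blast
    from coeff_submodule_add[OF Suc.prems(2) this d(1)] show "c \<in> S J"
      by simp
  qed
  then show ?case
    using monoD[OF Suc.prems(1)] by (metis subset_antisym)
qed

context module
begin

lemma kernel_pow_stabilizes:
  fixes n :: nat
  assumes noeth: "noetherian_ring TYPE('a)" and gen: "\<forall>v. \<exists>c. v = (\<Sum>i<n. c i *s g i)"
  shows "\<exists>s. \<forall>w. (x ^ Suc s) *s w = 0 \<longrightarrow> (x ^ s) *s w = 0"
proof -
  define S where "S j = {c. (\<forall>i\<ge>n. c i = 0) \<and> (x ^ j) *s (\<Sum>i<n. c i *s g i) = 0}" for j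
  have "mono S"
    unfolding mono_iff_le_Suc S_def by (auto simp flip: scale_scale)
  moreover have "coeff_submodule n (S j)" for j
  proof -
    let ?v = "\<lambda>c. \<Sum>i<n. c i *s g i"
    have "?v (\<lambda>i. c i + d i) = ?v c + ?v d" "?v (\<lambda>i. r * c i) = r *s ?v c" for c d r
      by (simp_all add: scale_left_distrib sum.distrib scale_sum_right)
    then show ?thesis
      unfolding coeff_submodule_def S_def
      by (simp del: scale_scale add: scale_right_distrib scale_left_commute[of "x ^ j"])
  qed
  ultimately obtain s where "\<forall>j\<ge>s. S j = S s"
    using noetherian_coeff_submodule_chain_stabilizes[OF noeth] by blast
  then have s: "S (Suc s) = S s"
    using le_SucI by blast
  have "(x ^ s) *s w = 0" if "(x ^ Suc s) *s w = 0" for w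
  proof -
    obtain c where "w = (\<Sum>i<n. c i *s g i)"
      using gen by blast
    also have "\<dots> = (\<Sum>i<n. (if i < n then c i else 0) *s g i)"
      by (rule sum.cong) simp_all
    finally have w: "w = (\<Sum>i<n. (if i < n then c i else 0) *s g i)" .
    then have "(\<lambda>i. if i < n then c i else 0) \<in> S (Suc s)"
      using that unfolding S_def by simp
    then have "(\<lambda>i. if i < n then c i else 0) \<in> S s"
      unfolding s .
    then show ?thesis
      unfolding S_def w by simp
  qed
  then show ?thesis
    by blast
qed

lemma nonzerodivisor_if_mpow_mod_Suc_subset_image:
  fixes n :: nat
  assumes noeth: "noetherian_ring TYPE('a)" and gen: "\<forall>v. \<exists>c. v = (\<Sum>i<n. c i *s g i)"
    and m: "is_ideal m" and "y \<in> m" and y_reg: "\<forall>v. y *s v = 0 \<longrightarrow> v = 0"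
    and sub: "\<And>j. j0 \<le> j \<Longrightarrow> mpow_mod scale m (Suc j) \<subseteq> (*s) x ` mpow_mod scale m j"
    and "x *s z = 0"
  shows "z = 0"
proof -
  obtain s where s: "\<And>w. (x ^ Suc s) *s w = 0 \<Longrightarrow> (x ^ s) *s w = 0"
    using kernel_pow_stabilizes[OF noeth gen] by blast
  have "mpow_mod scale m (j0 + t) \<subseteq> range ((*s) (x ^ t))" for t
  proof (induction t)
    case (Suc t)
    have "mpow_mod scale m (j0 + Suc t) \<subseteq> (*s) x ` mpow_mod scale m (j0 + t)"
      using sub[of "j0 + t"] by simp
    also have "\<dots> \<subseteq> (*s) x ` range ((*s) (x ^ t))"
      using Suc.IH by (rule image_mono)
    also have "\<dots> = range ((*s) (x ^ Suc t))"
      by (simp add: image_image)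
    finally show ?case .
  qed simp
  moreover have "(y ^ (j0 + s)) *s z \<in> mpow_mod scale m (j0 + s)"
    using mpow_mod_scale[OF m power_in_ideal_pow[OF m \<open>y \<in> m\<close>], where v = z and q = 0] by simp
  ultimately obtain w where w: "(y ^ (j0 + s)) *s z = (x ^ s) *s w"
    by blast
  have "(x ^ Suc s) *s w = x *s ((x ^ s) *s w)"
    by simp
  also have "\<dots> = (y ^ (j0 + s)) *s (x *s z)"
    unfolding w[symmetric] by (rule scale_left_commute)
  also have "\<dots> = 0"
    using \<open>x *s z = 0\<close> by simp
  finally have "(x ^ s) *s w = 0"
    by (rule s)
  then have "(y ^ (j0 + s)) *s z = 0"
    using w by simp
  moreover have "v = 0" if "(y ^ k) *s v = 0" for k v
    using that
  proof (induction k arbitrary: v)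
    case (Suc k)
    have "(y ^ k) *s (y *s v) = 0"
      using Suc.prems by (simp add: mult.commute)
    then show ?case
      using Suc.IH y_reg by blast
  qed simp
  ultimately show "z = 0"
    by blast
qed

lemma regular_element_if_depth_pos:
  assumes "depth scale m > 0"
  shows "\<exists>y\<in>m. \<forall>v. y *s v = 0 \<longrightarrow> v = 0"
proof -
  obtain k xs where "regular_seq scale m xs k" and "k > 0"
    using assms unfolding depth_def less_Sup_iff by (auto simp: zero_enat_def)
  moreover have "set_smult scale (ideal_gen (xs ` {..<0})) UNIV = {0}"
    by (simp add: ideal_gen_def set_smult_empty set_smult_zero_ideal)
  ultimately show ?thesis
    unfolding regular_seq_def by (metis singletonD singletonI)
qed

end

section \<open>Superficial elements and the associated graded module\<close>

definition graded_element ::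
    "('a::comm_ring_1 \<Rightarrow> 'b \<Rightarrow> 'b::ab_group_add) \<Rightarrow> 'a set \<Rightarrow> (nat \<Rightarrow> 'b) \<Rightarrow> bool" where
  "graded_element scale m f \<longleftrightarrow>
     (\<forall>n. f n \<in> mpow_mod scale m n) \<and> (\<exists>N. \<forall>n\<ge>N. f n \<in> mpow_mod scale m (Suc n))"

definition graded_zero ::
    "('a::comm_ring_1 \<Rightarrow> 'b \<Rightarrow> 'b::ab_group_add) \<Rightarrow> 'a set \<Rightarrow> (nat \<Rightarrow> 'b) \<Rightarrow> bool" where
  "graded_zero scale m f \<longleftrightarrow> (\<forall>n. f n \<in> mpow_mod scale m (Suc n))"

definition graded_product ::
    "('a::comm_ring_1 \<Rightarrow> 'b \<Rightarrow> 'b::ab_group_add) \<Rightarrow> (nat \<Rightarrow> 'a) \<Rightarrow> (nat \<Rightarrow> 'b) \<Rightarrow> nat \<Rightarrow> 'b" where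
  "graded_product scale u f n = (\<Sum>i\<le>n. scale (u i) (f (n - i)))"

text \<open>Regularity on \<open>G(M)\<close> of the initial form of \<open>x\<close> in degree one.\<close>
definition initial_form_regular ::
    "('a::comm_ring_1 \<Rightarrow> 'b \<Rightarrow> 'b::ab_group_add) \<Rightarrow> 'a set \<Rightarrow> 'a \<Rightarrow> bool" where
  "initial_form_regular scale m x \<longleftrightarrow>
     (\<forall>n v. scale x v \<in> mpow_mod scale m (Suc n) \<longrightarrow> v \<in> mpow_mod scale m n)"

lemma assoc_graded_depth_pos_iff:
  "is_ideal m \<Longrightarrow> assoc_graded_depth_pos scale m \<longleftrightarrow>
    (\<exists>u. graded_element (*) m u \<and> u 0 \<in> m \<and>
      (\<forall>f. graded_element scale m f \<and> graded_zero scale m (graded_product scale u f) \<longrightarrow> graded_zero scale m f))"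
  by (simp add: assoc_graded_depth_pos_def graded_element_def graded_zero_def graded_product_def mpow_mod_ring) blast

context module
begin

lemma Pair_zero_mem_mpow_mod_sum_scale:
  assumes "v \<in> mpow_mod scale m n"
  shows "(0, v) \<in> mpow_mod (sum_scale scale) m n"
proof -
  let ?T = "mpow_mod (sum_scale scale) m n"
  have "mpow_mod scale m n \<subseteq> {v. (0, v) \<in> ?T}"
    unfolding mpow_mod_def[of scale]
  proof (rule set_smult_least)
    show "0 \<in> {v. (0, v) \<in> ?T}"
      using set_smult_zero by (simp add: mpow_mod_def zero_prod_def[symmetric])
    show "p + q \<in> {v. (0, v) \<in> ?T}" if "p \<in> {v. (0, v) \<in> ?T}" "q \<in> {v. (0, v) \<in> ?T}" for p q
      using set_smult_add[of "(0, p)" _ _ _ "(0, q)"] that by (simp add: mpow_mod_def)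
    show "b *s w \<in> {v. (0, v) \<in> ?T}" if "b \<in> ideal_pow m n" for b w
      using set_smult_scale_mem[OF that, of "(0, w)" UNIV "sum_scale scale"]
      by (simp add: sum_scale_def mpow_mod_def)
  qed
  then show ?thesis
    using assms by blast
qed

lemma mpow_mod_sum_scale:
  assumes m: "is_ideal m"
  shows "mpow_mod (sum_scale scale) m n = ideal_pow m n \<times> mpow_mod scale m n"
proof
  show "mpow_mod (sum_scale scale) m n \<subseteq> ideal_pow m n \<times> mpow_mod scale m n"
    unfolding mpow_mod_def[of "sum_scale scale"]
  proof (rule set_smult_least)
    show "0 \<in> ideal_pow m n \<times> mpow_mod scale m n"
      using ideal_pow_ideal[OF m] subspace_mpow_mod[OF m]
      unfolding zero_prod_def is_ideal_def subspace_def by blast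
    show "p + q \<in> ideal_pow m n \<times> mpow_mod scale m n"
      if "p \<in> ideal_pow m n \<times> mpow_mod scale m n" "q \<in> ideal_pow m n \<times> mpow_mod scale m n" for p q
      using that ideal_pow_ideal[OF m] subspace_mpow_mod[OF m]
      unfolding mem_Times_iff is_ideal_def subspace_def by simp
    show "sum_scale scale a p \<in> ideal_pow m n \<times> mpow_mod scale m n" if "a \<in> ideal_pow m n" for a p
    proof -
      have "a * fst p \<in> ideal_pow m n"
        using that ideal_pow_ideal[OF m, of n] unfolding is_ideal_def by (metis mult.commute)
      moreover have "a *s snd p \<in> mpow_mod scale m n"
        unfolding mpow_mod_def using that by (rule set_smult_scale_mem) simp
      ultimately show ?thesis
        by (simp add: sum_scale_def)
    qed
  qed
  show "ideal_pow m n \<times> mpow_mod scale m n \<subseteq> mpow_mod (sum_scale scale) m n"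
  proof clarify
    fix a v assume "a \<in> ideal_pow m n" "v \<in> mpow_mod scale m n"
    have "(a, 0) \<in> mpow_mod (sum_scale scale) m n"
      using set_smult_scale_mem[OF \<open>a \<in> ideal_pow m n\<close>, of "(1, 0)" UNIV "sum_scale scale"]
      by (simp add: sum_scale_def mpow_mod_def)
    then have "(a, 0) + (0, v) \<in> mpow_mod (sum_scale scale) m n"
      using Pair_zero_mem_mpow_mod_sum_scale[OF \<open>v \<in> mpow_mod scale m n\<close>]
      unfolding mpow_mod_def by (rule set_smult_add)
    then show "(a, v) \<in> mpow_mod (sum_scale scale) m n"
      by simp
  qed
qed

lemma superficial_ring_if_superficial_sum_scale:
  assumes m: "is_ideal m" and sup: "superficial (sum_scale scale) m x"
  shows "superficial (*) m x"
proof -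
  obtain c where "c > 0" and c: "\<forall>n>c. mod_colon (sum_scale scale) (mpow_mod (sum_scale scale) m n) x
      \<inter> mpow_mod (sum_scale scale) m c = mpow_mod (sum_scale scale) m (n - 1)"
    using sup unfolding superficial_def by blast
  have zero: "0 \<in> mpow_mod scale m k" for k
    by (rule subspace_0[OF subspace_mpow_mod[OF m]])
  have "mod_colon (*) (ideal_pow m n) x \<inter> ideal_pow m c = ideal_pow m (n - 1)" if "n > c" for n
  proof (rule set_eqI)
    fix a
    have "a \<in> mod_colon (*) (ideal_pow m n) x \<inter> ideal_pow m c \<longleftrightarrow>
        (a, 0) \<in> mod_colon (sum_scale scale) (mpow_mod (sum_scale scale) m n) x \<inter> mpow_mod (sum_scale scale) m c"
      by (simp add: mod_colon_def sum_scale_def mpow_mod_sum_scale[OF m] zero)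
    also have "\<dots> \<longleftrightarrow> (a, 0) \<in> mpow_mod (sum_scale scale) m (n - 1)"
      by (simp only: c[rule_format, OF that])
    also have "\<dots> \<longleftrightarrow> a \<in> ideal_pow m (n - 1)"
      by (simp add: mpow_mod_sum_scale[OF m] zero)
    finally show "a \<in> mod_colon (*) (ideal_pow m n) x \<inter> ideal_pow m c \<longleftrightarrow> a \<in> ideal_pow m (n - 1)" .
  qed
  then show ?thesis
    using sup \<open>c > 0\<close> unfolding superficial_def by (auto simp: mpow_mod_ring[OF m])
qed

lemma graded_product_mem:
  assumes m: "is_ideal m" and u: "\<And>i. u i \<in> ideal_pow m i" and f: "\<And>j. f j \<in> mpow_mod scale m (j + d)"
  shows "graded_product scale u f n \<in> mpow_mod scale m (n + d)"
  unfolding graded_product_def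
proof (rule subspace_sum[OF subspace_mpow_mod[OF m]])
  fix i assume "i \<in> {..n}"
  have "u i *s f (n - i) \<in> mpow_mod scale m (i + (n - i + d))"
    by (rule mpow_mod_scale[OF m u f])
  then show "u i *s f (n - i) \<in> mpow_mod scale m (n + d)"
    using \<open>i \<in> {..n}\<close> by simp
qed

lemma graded_element_graded_product:
  assumes m: "is_ideal m" and u: "graded_element (*) m u" and f: "graded_element scale m f"
  shows "graded_element scale m (graded_product scale u f)"
proof -
  have u_mem: "u i \<in> ideal_pow m i" for i
    using u by (simp add: graded_element_def mpow_mod_ring[OF m])
  obtain Nu Nf where u_Suc: "\<And>i. i \<ge> Nu \<Longrightarrow> u i \<in> ideal_pow m (Suc i)"
    and f_Suc: "\<And>j. j \<ge> Nf \<Longrightarrow> f j \<in> mpow_mod scale m (Suc j)"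
    using u f by (auto simp: graded_element_def mpow_mod_ring[OF m])
  have "graded_product scale u f n \<in> mpow_mod scale m (Suc n)" if "n \<ge> Nu + Nf" for n
    unfolding graded_product_def
  proof (rule subspace_sum[OF subspace_mpow_mod[OF m]])
    fix i assume "i \<in> {..n}"
    show "u i *s f (n - i) \<in> mpow_mod scale m (Suc n)"
    proof (cases "i \<ge> Nu")
      case True
      then show ?thesis
        using mpow_mod_scale[OF m u_Suc[OF True], of "f (n - i)" "n - i"] f \<open>i \<in> {..n}\<close>
        by (simp add: graded_element_def)
    next
      case False
      then show ?thesis
        using mpow_mod_scale[OF m u_mem f_Suc, of "n - i" i] that \<open>i \<in> {..n}\<close> by simp
    qed
  qed
  moreover have "graded_product scale u f n \<in> mpow_mod scale m n" for n
    using graded_product_mem[OF m u_mem, of f 0] f by (simp add: graded_element_def)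
  ultimately show ?thesis
    unfolding graded_element_def by blast
qed

lemma scale_graded_product: "x *s graded_product scale u f n = graded_product scale u (\<lambda>j. x *s f j) n"
  unfolding graded_product_def scale_sum_right by (simp only: scale_left_commute[of x])

lemma graded_product_mem_Suc:
  assumes m: "is_ideal m" and u: "\<And>i. u i \<in> ideal_pow m i" "u 0 \<in> m"
    and f: "\<And>j. f j \<in> mpow_mod scale m j" and low: "\<And>j. j < k \<Longrightarrow> f j \<in> mpow_mod scale m (Suc j)"
    and "n \<le> k"
  shows "graded_product scale u f n \<in> mpow_mod scale m (Suc n)"
  unfolding graded_product_def
proof (rule subspace_sum[OF subspace_mpow_mod[OF m]])
  fix i assume "i \<in> {..n}"
  show "u i *s f (n - i) \<in> mpow_mod scale m (Suc n)"
  proof (cases "i = 0")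
    case True
    have "u 0 *s f n \<in> mpow_mod scale m (1 + n)"
      using u(2) f ideal_pow_1[OF m] by (intro mpow_mod_scale[OF m]) simp_all
    then show ?thesis
      using True by simp
  next
    case False
    then have "u i *s f (n - i) \<in> mpow_mod scale m (i + Suc (n - i))"
      using low \<open>n \<le> k\<close> \<open>i \<in> {..n}\<close> by (intro mpow_mod_scale[OF m u(1)]) simp
    then show ?thesis
      using \<open>i \<in> {..n}\<close> by simp
  qed
qed

lemma superficial_colon_eventually:
  assumes m: "is_ideal m" and "superficial scale m x"
  obtains c where "\<And>n v. c \<le> n \<Longrightarrow> v \<in> mpow_mod scale m n \<Longrightarrow>
    x *s v \<in> mpow_mod scale m (Suc (Suc n)) \<Longrightarrow> v \<in> mpow_mod scale m (Suc n)"
proof -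
  obtain c where c: "\<And>n. n > c \<Longrightarrow>
      mod_colon scale (mpow_mod scale m n) x \<inter> mpow_mod scale m c = mpow_mod scale m (n - 1)"
    using assms(2) unfolding superficial_def by blast
  have "v \<in> mpow_mod scale m (Suc n)"
    if "c \<le> n" "v \<in> mpow_mod scale m n" "x *s v \<in> mpow_mod scale m (Suc (Suc n))" for n v
  proof -
    have "v \<in> mod_colon scale (mpow_mod scale m (Suc (Suc n))) x \<inter> mpow_mod scale m c"
      using that mpow_mod_antimono[OF m, of c n] by (auto simp: mod_colon_def)
    then show ?thesis
      using c[of "Suc (Suc n)"] \<open>c \<le> n\<close> by simp
  qed
  then show ?thesis
    using that by blast
qed

lemma graded_zero_if_superficial_annihilates:
  assumes m: "is_ideal m" and sup: "superficial scale m x"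
    and u: "graded_element (*) m u" "u 0 \<in> m"
    and nzd: "\<And>f. graded_element scale m f \<Longrightarrow> graded_zero scale m (graded_product scale u f) \<Longrightarrow>
      graded_zero scale m f"
  shows "graded_element scale m f \<Longrightarrow> (\<And>n. x *s f n \<in> mpow_mod scale m (Suc (Suc n))) \<Longrightarrow>
    graded_zero scale m f"
proof -
  obtain c where c: "\<And>n v. c \<le> n \<Longrightarrow> v \<in> mpow_mod scale m n \<Longrightarrow>
      x *s v \<in> mpow_mod scale m (Suc (Suc n)) \<Longrightarrow> v \<in> mpow_mod scale m (Suc n)"
    using superficial_colon_eventually[OF m sup] by blast
  have u_mem: "u i \<in> ideal_pow m i" for i
    using u(1) by (simp add: graded_element_def mpow_mod_ring[OF m])
  (* Descending induction on the number k of leading components of f known to vanish in G(M):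
     multiplication with u raises this number, and from c on superficiality takes over. *)
  define Q where "Q k \<longleftrightarrow> (\<forall>f. graded_element scale m f \<and>
    (\<forall>n. x *s f n \<in> mpow_mod scale m (Suc (Suc n))) \<and> (\<forall>n<k. f n \<in> mpow_mod scale m (Suc n)) \<longrightarrow>
    graded_zero scale m f)" for k
  have "Q k" if "k \<le> c" for k
    using that
  proof (induction k rule: inc_induct)
    case base
    show ?case
      unfolding Q_def graded_zero_def graded_element_def using c by (metis not_le)
  next
    case (step k)
    show ?case
      unfolding Q_def
    proof (intro allI impI)
      fix f
      assume f: "graded_element scale m f \<and> (\<forall>n. x *s f n \<in> mpow_mod scale m (Suc (Suc n))) \<and>
        (\<forall>n<k. f n \<in> mpow_mod scale m (Suc n))"
      let ?g = "graded_product scale u f"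
      have "graded_element scale m ?g"
        using graded_element_graded_product[OF m u(1)] f by blast
      moreover have "x *s ?g n \<in> mpow_mod scale m (Suc (Suc n))" for n
        unfolding scale_graded_product using graded_product_mem[OF m u_mem, of "\<lambda>j. x *s f j" 2 n] f by simp
      moreover have "?g n \<in> mpow_mod scale m (Suc n)" if "n < Suc k" for n
        using f that by (intro graded_product_mem_Suc[OF m u_mem u(2), of _ k]) (simp_all add: graded_element_def)
      ultimately have "graded_zero scale m ?g"
        using step.IH unfolding Q_def by blast
      then show "graded_zero scale m f"
        using nzd f by blast
    qed
  qed
  then show "graded_element scale m f \<Longrightarrow> (\<And>n. x *s f n \<in> mpow_mod scale m (Suc (Suc n))) \<Longrightarrow>
      graded_zero scale m f"
    unfolding Q_def by blast
qed

lemma initial_form_regular_if_superficial: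
  assumes m: "is_ideal m" and sup: "superficial scale m x" and depth: "assoc_graded_depth_pos scale m"
  shows "initial_form_regular scale m x"
proof -
  obtain u where u: "graded_element (*) m u" "u 0 \<in> m"
    and nzd: "\<And>f. graded_element scale m f \<Longrightarrow> graded_zero scale m (graded_product scale u f) \<Longrightarrow>
      graded_zero scale m f"
    using depth unfolding assoc_graded_depth_pos_iff[OF m] by blast
  have "v \<in> mpow_mod scale m n" if "x *s v \<in> mpow_mod scale m (Suc n)" for n v
    using that
  proof (induction n arbitrary: v)
    case (Suc n)
    then have "v \<in> mpow_mod scale m n"
      using mpow_mod_antimono[OF m, of "Suc n" "Suc (Suc n)"] by auto
    define f where "f j = (if j = n then v else 0)" for j
    have zero: "0 \<in> mpow_mod scale m k" for k
      by (rule subspace_0[OF subspace_mpow_mod[OF m]])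
    have f: "graded_element scale m f"
      unfolding graded_element_def
    proof (intro conjI exI[of _ "Suc n"] allI impI)
      show "f j \<in> mpow_mod scale m j" for j
        using \<open>v \<in> mpow_mod scale m n\<close> zero by (simp add: f_def)
      show "f j \<in> mpow_mod scale m (Suc j)" if "Suc n \<le> j" for j
        using that zero by (simp add: f_def)
    qed
    have "x *s f j \<in> mpow_mod scale m (Suc (Suc j))" for j
      unfolding f_def using Suc.prems zero by simp
    then have "graded_zero scale m f"
      using graded_zero_if_superficial_annihilates[OF m sup u nzd f] by blast
    then show ?case
      unfolding graded_zero_def f_def by (metis (full_types))
  qed simp
  then show ?thesis
    unfolding initial_form_regular_def by blast
qed

lemma assoc_graded_depth_pos_if_initial_form_regular:
  assumes m: "is_ideal m" and "x \<in> m" and reg: "initial_form_regular scale m x"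
  shows "assoc_graded_depth_pos scale m"
proof -
  define u where "u n = (if n = 1 then x else 0)" for n :: nat
  have zero: "(0::'a) \<in> ideal_pow m k" for k
    using ideal_pow_ideal[OF m] unfolding is_ideal_def by blast
  show ?thesis
    unfolding assoc_graded_depth_pos_iff[OF m]
  proof (intro exI[of _ u] conjI allI impI)
    show "graded_element (*) m u"
      unfolding graded_element_def mpow_mod_ring[OF m] u_def
      using zero \<open>x \<in> m\<close> ideal_pow_1[OF m] by (auto intro!: exI[of _ 2])
    show "u 0 \<in> m"
      using zero[of 1] ideal_pow_1[OF m] by (simp add: u_def)
    fix f assume "graded_element scale m f \<and> graded_zero scale m (graded_product scale u f)"
    then have "graded_product scale u f (Suc n) \<in> mpow_mod scale m (Suc (Suc n))" for n
      unfolding graded_zero_def by blast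
    moreover have "graded_product scale u f (Suc n) = x *s f n" for n
    proof -
      have "graded_product scale u f (Suc n) = (\<Sum>i\<le>Suc n. if i = 1 then x *s f (Suc n - i) else 0)"
        unfolding graded_product_def u_def by (rule sum.cong) simp_all
      also have "\<dots> = x *s f n"
        by (subst sum.delta) simp_all
      finally show ?thesis .
    qed
    ultimately show "graded_zero scale m f"
      using reg unfolding graded_zero_def initial_form_regular_def by metis
  qed
qed

end

section \<open>The colon modules \<open>(m\<^sup>i\<^sup>+\<^sup>1 M :\<^sub>M x)\<close>\<close>

context module
begin

lemma mpow_mod_subset_colon:
  assumes m: "is_ideal m" and "x \<in> m"
  shows "mpow_mod scale m i \<subseteq> mod_colon scale (mpow_mod scale m (Suc i)) x"
  using mpow_mod_scale[OF m, of x 1 _ i] \<open>x \<in> m\<close> ideal_pow_1[OF m] by (auto simp: mod_colon_def)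

lemma colon_mpow_mod_eq_if_presentation:
  assumes m: "is_ideal m" and "x \<in> m" and A: "initial_form_regular (*) m x"
    and pres: "has_presentation_in_pow scale m l" and "i < l"
  shows "mod_colon scale (mpow_mod scale m (Suc i)) x = mpow_mod scale m i"
proof
  show "mpow_mod scale m i \<subseteq> mod_colon scale (mpow_mod scale m (Suc i)) x"
    by (rule mpow_mod_subset_colon[OF m \<open>x \<in> m\<close>])
  obtain n k :: nat and g phi where gen: "\<forall>v. \<exists>c. v = (\<Sum>j<n. c j *s g j)"
    and rel: "\<forall>c. (\<Sum>j<n. c j *s g j) = 0 \<longleftrightarrow> (\<exists>b. \<forall>j<n. c j = (\<Sum>t<k. phi j t * b t))"
    and phi: "\<forall>j<n. \<forall>t<k. phi j t \<in> ideal_pow m l"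
    using pres unfolding has_presentation_in_pow_def by blast
  show "mod_colon scale (mpow_mod scale m (Suc i)) x \<subseteq> mpow_mod scale m i"
  proof
    fix v assume "v \<in> mod_colon scale (mpow_mod scale m (Suc i)) x"
    then obtain b where b: "\<forall>j<n. b j \<in> ideal_pow m (Suc i)" and xv: "x *s v = (\<Sum>j<n. b j *s g j)"
      using set_smult_UNIV_generators[OF gen ideal_pow_ideal[OF m]] by (auto simp: mod_colon_def mpow_mod_def)
    obtain c where v: "v = (\<Sum>j<n. c j *s g j)"
      using gen by blast
    have "(\<Sum>j<n. (x * c j - b j) *s g j) = x *s v - (\<Sum>j<n. b j *s g j)"
      unfolding v by (simp add: scale_left_diff_distrib sum_subtractf scale_sum_right)
    then obtain \<beta> where \<beta>: "\<forall>j<n. x * c j - b j = (\<Sum>t<k. phi j t * \<beta> t)"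
      using rel xv by auto
    have "c j \<in> ideal_pow m i" if "j < n" for j
    proof -
      have "(\<Sum>t<k. phi j t * \<beta> t) \<in> ideal_pow m l"
        using phi that ideal_pow_ideal[OF m, of l] unfolding is_ideal_iff_subspace
        by (intro ring.subspace_sum) (auto simp: ring.subspace_def mult.commute)
      then have "x * c j - b j \<in> ideal_pow m (Suc i)"
        using \<beta> that ideal_pow_antimono[OF m, of "Suc i" l] \<open>i < l\<close> by auto
      then have "(x * c j - b j) + b j \<in> ideal_pow m (Suc i)"
        using b that ideal_pow_ideal[OF m, of "Suc i"] unfolding is_ideal_def by blast
      then show ?thesis
        using A unfolding initial_form_regular_def mpow_mod_ring[OF m] by simp
    qed
    then show "v \<in> mpow_mod scale m i"
      unfolding v using set_smult_UNIV_generators[OF gen ideal_pow_ideal[OF m]]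
      by (auto simp: mpow_mod_def)
  qed
qed

lemma mpow_mod_Suc_subset_image_if_colon:
  assumes m: "is_ideal m"
    and colon: "\<forall>i<l. mod_colon scale (mpow_mod scale m (Suc i)) x = mpow_mod scale m i"
    and img: "mpow_mod scale m l \<subseteq> range ((*s) x)"
  shows "l - 1 \<le> j \<Longrightarrow> mpow_mod scale m (Suc j) \<subseteq> (*s) x ` mpow_mod scale m j"
proof (induction j rule: dec_induct)
  case base
  show ?case
  proof (cases "l = 0")
    case True
    then show ?thesis
      using img by auto
  next
    case False
    then have l: "Suc (l - 1) = l"
      by simp
    show ?thesis
    proof
      fix v assume "v \<in> mpow_mod scale m (Suc (l - 1))"
      then obtain w where "v = x *s w" and "w \<in> mod_colon scale (mpow_mod scale m (Suc (l - 1))) x"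
        using img unfolding l mod_colon_def by blast
      moreover have "mod_colon scale (mpow_mod scale m (Suc (l - 1))) x = mpow_mod scale m (l - 1)"
        using False by (intro colon[rule_format]) simp
      ultimately show "v \<in> (*s) x ` mpow_mod scale m (l - 1)"
        by blast
    qed
  qed
next
  case (step j)
  have "subspace ((*s) x ` mpow_mod scale m (Suc j))"
    using module_hom.subspace_image[OF module_hom_scale_self subspace_mpow_mod[OF m]] by simp
  then have "set_smult scale m (mpow_mod scale m (Suc j)) \<subseteq> (*s) x ` mpow_mod scale m (Suc j)"
  proof (rule set_smult_subset_subspace)
    fix a w assume "a \<in> m" "w \<in> mpow_mod scale m (Suc j)"
    then obtain w' where w': "w = x *s w'" "w' \<in> mpow_mod scale m j"
      using step.IH by blast
    have "a *s w' \<in> mpow_mod scale m (1 + j)"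
      using \<open>a \<in> m\<close> ideal_pow_1[OF m] by (intro mpow_mod_scale[OF m _ w'(2)]) simp
    then show "a *s w \<in> (*s) x ` mpow_mod scale m (Suc j)"
      unfolding w'(1) scale_left_commute[of a] by (intro imageI) simp
  qed
  then show ?case
    using mpow_mod_Suc_subset[OF m, of "Suc j"] by blast
qed

lemma initial_form_regular_if_mpow_mod_Suc_subset_image:
  assumes colon: "\<forall>i<l. mod_colon scale (mpow_mod scale m (Suc i)) x = mpow_mod scale m i"
    and img: "\<And>j. l - 1 \<le> j \<Longrightarrow> mpow_mod scale m (Suc j) \<subseteq> (*s) x ` mpow_mod scale m j"
    and reg: "\<And>z. x *s z = 0 \<Longrightarrow> z = 0"
  shows "initial_form_regular scale m x"
  unfolding initial_form_regular_def
proof (intro allI impI)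
  fix n v assume xv: "x *s v \<in> mpow_mod scale m (Suc n)"
  show "v \<in> mpow_mod scale m n"
  proof (cases "n < l")
    case True
    then show ?thesis
      using colon xv unfolding mod_colon_def by blast
  next
    case False
    then obtain w where "x *s v = x *s w" and w: "w \<in> mpow_mod scale m n"
      using img[of n] xv by force
    then have "x *s (v - w) = 0"
      by (simp add: scale_right_diff_distrib)
    then show ?thesis
      using reg w by force
  qed
qed

end

theorem lemma4p5:
  fixes m :: "'a::comm_ring_1 set"
    and scale :: "'a \<Rightarrow> 'b \<Rightarrow> 'b::ab_group_add"
    and x :: 'a and l :: nat
  assumes local: "noetherian_local m"
    and resfield: "infinite_residue_field m"
    and dimA: "krull_dim ({0} :: 'a set) > 0"
    and CM_A: "cohen_macaulay ((*) :: 'a \<Rightarrow> 'a \<Rightarrow> 'a) m"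
    and modM: "module scale"
    and CM_M: "cohen_macaulay scale m"
    and dimM: "module_dim scale = 1"
    and pres: "has_presentation_in_pow scale m l"
    and GA: "assoc_graded_depth_pos ((*) :: 'a \<Rightarrow> 'a \<Rightarrow> 'a) m"
    and sup: "superficial (sum_scale scale) m x"
  shows "(\<forall>i<l. mod_colon scale (mpow_mod scale m (Suc i)) x = mpow_mod scale m i)
       \<and> (mpow_mod scale m l \<subseteq> range (scale x) \<longrightarrow> assoc_graded_depth_pos scale m)"
proof -
  interpret M: module scale
    by (rule modM)
  have m: "is_ideal m" and noeth: "noetherian_ring TYPE('a)"
    using local unfolding noetherian_local_def maximal_ideal_def by simp_all
  have "x \<in> m"
    using sup unfolding superficial_def by simp
  have "initial_form_regular (*) m x"
    using ring.initial_form_regular_if_superficial[OF m M.superficial_ring_if_superficial_sum_scale[OF m sup] GA] .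
  then have colon: "\<forall>i<l. mod_colon scale (mpow_mod scale m (Suc i)) x = mpow_mod scale m i"
    using M.colon_mpow_mod_eq_if_presentation[OF m \<open>x \<in> m\<close> _ pres] by blast
  moreover have "assoc_graded_depth_pos scale m" if img: "mpow_mod scale m l \<subseteq> range (scale x)"
  proof -
    obtain n :: nat and g where gen: "\<forall>v. \<exists>c. v = (\<Sum>i<n. scale (c i) (g i))"
      using pres unfolding has_presentation_in_pow_def by blast
    obtain y where "y \<in> m" and y: "\<forall>v. scale y v = 0 \<longrightarrow> v = 0"
      using M.regular_element_if_depth_pos[of m] CM_M dimM unfolding cohen_macaulay_def by auto
    have img_pow: "\<And>j. l - 1 \<le> j \<Longrightarrow> mpow_mod scale m (Suc j) \<subseteq> scale x ` mpow_mod scale m j"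
      by (rule M.mpow_mod_Suc_subset_image_if_colon[OF m colon img])
    have "\<And>z. scale x z = 0 \<Longrightarrow> z = 0"
      by (rule M.nonzerodivisor_if_mpow_mod_Suc_subset_image[OF noeth gen m \<open>y \<in> m\<close> y img_pow])
    then show ?thesis
      using M.assoc_graded_depth_pos_if_initial_form_regular[OF m \<open>x \<in> m\<close>]
        M.initial_form_regular_if_mpow_mod_Suc_subset_image[OF colon img_pow] by blast
  qed
  ultimately show ?thesis
    by blast
qed

end
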